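(* Let $a\in[0,\infty)$ and let $\theta:[0,1]\to[0,\infty]$ and $\vartheta:[0,\infty]\to[0,1]$ be continuous and decreasing functions such that $O_{\theta,\vartheta}(x,y)=\vartheta(\theta(x)+\theta(y))$ defines an overlap function $O_{\theta,\vartheta}:[0,1]^2\to[0,1]$. Suppose $\theta(x)=\frac{a}{2}$ if and only if $x=1$. Then the following are equivalent: (1) $O_{\theta,\vartheta}$ is a t-norm; (2) $1$ is a neutral element of $O_{\theta,\vartheta}$; (3) $\vartheta(\theta(x)+\frac{a}{2})=x$ for all $x\in[0,1]$.
   Context: "Decreasing" means non-increasing and "increasing" means non-decreasing. Arithmetic in $[0,\infty]$ uses $c+\infty=\infty$; continuity on $[0,\infty]$ refers to the usual topology of the extended half-line. An overlap function is a map $O:[0,1]^2\to[0,1]$ that is (O1) commutative, (O2) $O(x,y)=0$ iff $xy=0$, (O3) $O(x,y)=1$ iff $xy=1$, (O4) increasing in each variable, (O5) continuous. A t-norm is a commutative, associative map $T:[0,1]^2\to[0,1]$, increasing in each variable, with $T(x,1)=x$ for all $x$. *)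

theory Defs
  imports "HOL-Analysis.Analysis"
begin

text \<open>Binary operations on the unit interval are modelled as total functions
  real \<Rightarrow> real \<Rightarrow> real; all properties are relativised to [0,1].
  The extended half-line [0,\<infinity>] is the type ennreal.\<close>

definition overlap_function :: "(real \<Rightarrow> real \<Rightarrow> real) \<Rightarrow> bool" where
  "overlap_function Ov \<longleftrightarrow>
     (\<forall>x\<in>{0..1}. \<forall>y\<in>{0..1}. Ov x y \<in> {0..1}) \<and>
     (\<forall>x\<in>{0..1}. \<forall>y\<in>{0..1}. Ov x y = Ov y x) \<and>
     (\<forall>x\<in>{0..1}. \<forall>y\<in>{0..1}. Ov x y = 0 \<longleftrightarrow> x * y = 0) \<and>
     (\<forall>x\<in>{0..1}. \<forall>y\<in>{0..1}. Ov x y = 1 \<longleftrightarrow> x * y = 1) \<and>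
     (\<forall>x\<in>{0..1}. \<forall>y\<in>{0..1}. \<forall>z\<in>{0..1}. y \<le> z \<longrightarrow> Ov x y \<le> Ov x z \<and> Ov y x \<le> Ov z x) \<and>
     continuous_on ({0..1} \<times> {0..1}) (\<lambda>(x, y). Ov x y)"

definition t_norm :: "(real \<Rightarrow> real \<Rightarrow> real) \<Rightarrow> bool" where
  "t_norm T \<longleftrightarrow>
     (\<forall>x\<in>{0..1}. \<forall>y\<in>{0..1}. T x y \<in> {0..1}) \<and>
     (\<forall>x\<in>{0..1}. \<forall>y\<in>{0..1}. T x y = T y x) \<and>
     (\<forall>x\<in>{0..1}. \<forall>y\<in>{0..1}. \<forall>z\<in>{0..1}. T (T x y) z = T x (T y z)) \<and>
     (\<forall>x\<in>{0..1}. \<forall>y\<in>{0..1}. \<forall>z\<in>{0..1}. y \<le> z \<longrightarrow> T x y \<le> T x z \<and> T y x \<le> T z x) \<and>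
     (\<forall>x\<in>{0..1}. T x 1 = x)"

definition neutral_element :: "(real \<Rightarrow> real \<Rightarrow> real) \<Rightarrow> real \<Rightarrow> bool" where
  "neutral_element Ov e \<longleftrightarrow> (\<forall>x\<in>{0..1}. Ov e x = x \<and> Ov x e = x)"

end

theory Submission
  imports Defs
begin

text \<open>Since \<open>O(x, x) = 0\<close> only for \<open>x = 0\<close>, no point can have the midpoint of \<open>\<theta> 1\<close> and \<open>\<theta> 0\<close>
  as its \<open>\<theta>\<close>-value, so by the intermediate value theorem \<open>\<theta> 0 = \<infinity>\<close> and \<open>\<theta>\<close> maps \<open>[0,1]\<close>
  onto \<open>[\<theta> 1, \<infinity>]\<close>. Then \<open>\<theta> (O(x, y)) + \<theta> 1 = \<theta> x + \<theta> y\<close>, and associativity follows by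
  cancelling \<open>\<theta> 1\<close>, which is finite because \<open>\<theta> 1 < \<theta> 0\<close>.\<close>

lemma t_norm_imp_neutral_one:
  assumes "t_norm T"
  shows "neutral_element T 1"
  using assms unfolding t_norm_def neutral_element_def by auto

lemma neutral_one_generated_iff:
  fixes \<theta> :: "real \<Rightarrow> 'b::ab_semigroup_add" and \<phi> :: "'b \<Rightarrow> real"
  shows "neutral_element (\<lambda>x y. \<phi> (\<theta> x + \<theta> y)) 1 \<longleftrightarrow> (\<forall>x\<in>{0..1}. \<phi> (\<theta> x + \<theta> 1) = x)"
  unfolding neutral_element_def by (auto simp: add.commute)

lemma generator_one_less_zero:
  fixes \<theta> :: "real \<Rightarrow> 'b::{linorder, plus}" and \<phi> :: "'b \<Rightarrow> real"
  assumes dec: "\<forall>x\<in>{0..1}. \<forall>y\<in>{0..1}. x \<le> y \<longrightarrow> \<theta> y \<le> \<theta> x"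
    and inv: "\<forall>x\<in>{0..1}. \<phi> (\<theta> x + \<theta> 1) = x"
  shows "\<theta> 1 < \<theta> 0"
proof -
  have "\<theta> 0 \<noteq> \<theta> 1"
    using inv[rule_format, of 0] inv[rule_format, of 1] by force
  moreover have "\<theta> 1 \<le> \<theta> 0"
    using dec by simp
  ultimately show ?thesis
    by simp
qed

lemma generator_zero_eq_top:
  fixes \<theta> :: "real \<Rightarrow> ennreal" and \<phi> :: "ennreal \<Rightarrow> real"
  assumes cont: "continuous_on {0..1} \<theta>"
    and dec: "\<forall>x\<in>{0..1}. \<forall>y\<in>{0..1}. x \<le> y \<longrightarrow> \<theta> y \<le> \<theta> x"
    and inv: "\<forall>x\<in>{0..1}. \<phi> (\<theta> x + \<theta> 1) = x"
    and diag_zero: "\<forall>x\<in>{0..1}. \<phi> (\<theta> x + \<theta> x) = 0 \<longrightarrow> x = 0"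
  shows "\<theta> 0 = \<infinity>"
proof (rule ccontr)
  assume "\<theta> 0 \<noteq> \<infinity>"
  moreover have "\<theta> 1 < \<theta> 0"
    using generator_one_less_zero[OF dec inv] .
  ultimately obtain r c where r: "\<theta> 0 = ennreal r" and c: "\<theta> 1 = ennreal c" "0 \<le> c" "c < r"
    by (cases "\<theta> 0"; cases "\<theta> 1") (auto simp: ennreal_less_iff)
  define m where "m = (c + r) / 2"
  obtain x where x: "0 \<le> x" "x \<le> 1" "\<theta> x = ennreal m"
    using IVT2'[of \<theta> 1 "ennreal m" 0] cont c r by (auto simp: m_def)
  have "\<theta> x + \<theta> x = \<theta> 0 + \<theta> 1"
    using x c r by (simp add: m_def flip: ennreal_plus)
  then have "x = 0"
    using diag_zero inv x by auto
  then show False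
    using x r c by (simp add: m_def)
qed

lemma generated_op_additive:
  fixes \<theta> :: "real \<Rightarrow> ennreal" and \<phi> :: "ennreal \<Rightarrow> real"
  assumes cont: "continuous_on {0..1} \<theta>"
    and dec: "\<forall>x\<in>{0..1}. \<forall>y\<in>{0..1}. x \<le> y \<longrightarrow> \<theta> y \<le> \<theta> x"
    and top: "\<theta> 0 = \<infinity>"
    and inv: "\<forall>x\<in>{0..1}. \<phi> (\<theta> x + \<theta> 1) = x"
    and x: "x \<in> {0..1}" and y: "y \<in> {0..1}"
  shows "\<theta> (\<phi> (\<theta> x + \<theta> y)) + \<theta> 1 = \<theta> x + \<theta> y"
proof -
  have "\<theta> 1 \<le> \<theta> y"
    using dec y by simp
  then obtain d where d: "\<theta> y = \<theta> 1 + d"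
    using le_iff_add by blast
  have "\<theta> 1 \<le> \<theta> x + d"
    using dec x by (auto intro: add_increasing2)
  then obtain v where v: "0 \<le> v" "v \<le> 1" "\<theta> v = \<theta> x + d"
    using IVT2'[of \<theta> 1 "\<theta> x + d" 0] cont top by auto
  have "\<theta> x + \<theta> y = \<theta> v + \<theta> 1"
    using v d by (simp add: ac_simps)
  moreover have "\<phi> (\<theta> v + \<theta> 1) = v"
    using inv v(1,2) by simp
  ultimately show ?thesis
    by simp
qed

lemma generated_op_assoc:
  fixes \<theta> :: "real \<Rightarrow> ennreal" and \<phi> :: "ennreal \<Rightarrow> real" and c :: ennreal
  assumes additive: "\<forall>x\<in>{0..1}. \<forall>y\<in>{0..1}. \<theta> (\<phi> (\<theta> x + \<theta> y)) + c = \<theta> x + \<theta> y"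
    and finite: "c \<noteq> \<infinity>"
    and xyz: "x \<in> {0..1}" "y \<in> {0..1}" "z \<in> {0..1}"
  shows "\<phi> (\<theta> (\<phi> (\<theta> x + \<theta> y)) + \<theta> z) = \<phi> (\<theta> x + \<theta> (\<phi> (\<theta> y + \<theta> z)))"
proof -
  have xy: "\<theta> (\<phi> (\<theta> x + \<theta> y)) + c = \<theta> x + \<theta> y"
    and yz: "\<theta> (\<phi> (\<theta> y + \<theta> z)) + c = \<theta> y + \<theta> z"
    using additive xyz by auto
  have "c + (\<theta> (\<phi> (\<theta> x + \<theta> y)) + \<theta> z) = (\<theta> (\<phi> (\<theta> x + \<theta> y)) + c) + \<theta> z"
    by (simp only: ac_simps)
  also have "\<dots> = \<theta> x + (\<theta> (\<phi> (\<theta> y + \<theta> z)) + c)"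
    unfolding xy yz by (simp only: ac_simps)
  also have "\<dots> = c + (\<theta> x + \<theta> (\<phi> (\<theta> y + \<theta> z)))"
    by (simp only: ac_simps)
  finally show ?thesis
    using finite by (simp add: ennreal_add_left_cancel)
qed

lemma t_norm_if_neutral_one:
  fixes \<theta> :: "real \<Rightarrow> ennreal" and \<phi> :: "ennreal \<Rightarrow> real"
  assumes cont: "continuous_on {0..1} \<theta>"
    and dec: "\<forall>x\<in>{0..1}. \<forall>y\<in>{0..1}. x \<le> y \<longrightarrow> \<theta> y \<le> \<theta> x"
    and overlap: "overlap_function (\<lambda>x y. \<phi> (\<theta> x + \<theta> y))"
    and neutral: "neutral_element (\<lambda>x y. \<phi> (\<theta> x + \<theta> y)) 1"
  shows "t_norm (\<lambda>x y. \<phi> (\<theta> x + \<theta> y))"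
proof -
  have inv: "\<forall>x\<in>{0..1}. \<phi> (\<theta> x + \<theta> 1) = x"
    using neutral neutral_one_generated_iff by blast
  have diag_zero: "\<forall>x\<in>{0..1}. \<phi> (\<theta> x + \<theta> x) = 0 \<longrightarrow> x = 0"
    using overlap unfolding overlap_function_def by auto
  have "\<theta> 0 = \<infinity>"
    using generator_zero_eq_top[OF cont dec inv diag_zero] .
  then have additive: "\<forall>x\<in>{0..1}. \<forall>y\<in>{0..1}. \<theta> (\<phi> (\<theta> x + \<theta> y)) + \<theta> 1 = \<theta> x + \<theta> y"
    using generated_op_additive[OF cont dec _ inv] by blast
  have "\<theta> 1 \<noteq> \<infinity>"
    using generator_one_less_zero[OF dec inv] by auto
  then have "\<forall>x\<in>{0..1}. \<forall>y\<in>{0..1}. \<forall>z\<in>{0..1}.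
      \<phi> (\<theta> (\<phi> (\<theta> x + \<theta> y)) + \<theta> z) = \<phi> (\<theta> x + \<theta> (\<phi> (\<theta> y + \<theta> z)))"
    using generated_op_assoc[OF additive] by blast
  with overlap neutral show ?thesis
    unfolding t_norm_def overlap_function_def neutral_element_def by auto
qed

theorem theorem4p1:
  fixes a :: real and \<theta> :: "real \<Rightarrow> ennreal" and \<phi> :: "ennreal \<Rightarrow> real"
  assumes a_nonneg: "a \<ge> 0"
    and \<theta>_cont: "continuous_on {0..1} \<theta>"
    and \<theta>_dec: "\<forall>x\<in>{0..1}. \<forall>y\<in>{0..1}. x \<le> y \<longrightarrow> \<theta> y \<le> \<theta> x"
    and \<phi>_range: "\<forall>t. \<phi> t \<in> {0..1}"
    and \<phi>_cont: "continuous_on UNIV \<phi>"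
    and \<phi>_dec: "\<forall>s t. s \<le> t \<longrightarrow> \<phi> t \<le> \<phi> s"
    and overlap: "overlap_function (\<lambda>x y. \<phi> (\<theta> x + \<theta> y))"
    and \<theta>_half: "\<forall>x\<in>{0..1}. \<theta> x = ennreal (a / 2) \<longleftrightarrow> x = 1"
  shows "(t_norm (\<lambda>x y. \<phi> (\<theta> x + \<theta> y)) \<longleftrightarrow> neutral_element (\<lambda>x y. \<phi> (\<theta> x + \<theta> y)) 1)
       \<and> (neutral_element (\<lambda>x y. \<phi> (\<theta> x + \<theta> y)) 1 \<longleftrightarrow>
            (\<forall>x\<in>{0..1}. \<phi> (\<theta> x + ennreal (a / 2)) = x))"
proof -
  have "\<theta> 1 = ennreal (a / 2)"
    using \<theta>_half by simp
  then show ?thesis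
    using t_norm_imp_neutral_one t_norm_if_neutral_one[OF \<theta>_cont \<theta>_dec overlap]
      neutral_one_generated_iff[of \<phi> \<theta>]
    by metis
qed

end
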